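(* Let $\mathcal{E}$ be a set of entities and $\mathcal{R}$ a set of relations, and let a triple be an element of $\mathcal{E}\times\mathcal{R}\times\mathcal{E}$. Fix a test set $\mathcal{T}_{test}$ of triples and an evaluation assumption WA $\in\{\text{CWA},\text{RS-POWA}\}$, which determines a set $N_{WA}$ of triples disjoint from $\mathcal{T}_{test}$ (described in the context). Let $\mathcal{T}^1_{predict}$ be a finite set of predicted triples, each carrying a real score, and let $\mathcal{T}^2_{predict}=\mathcal{T}^1_{predict}\cup\{(h,r,t)\}$, where $(h,r,t)\notin\mathcal{T}^1_{predict}$ is a triple with a score and the triples of $\mathcal{T}^1_{predict}$ keep their scores. If $(h,r,t)\in\mathcal{T}_{test}$ (i.e. $(h,r,t)$ is in the positive set $\mathcal{T}^{WA+}_{predict}=\mathcal{T}^2_{predict}\cap\mathcal{T}_{test}$), then $RS^2_{TSP}>RS^1_{TSP}$, where $RS^k_{TSP}$ denotes the ranking score of $\mathcal{T}^k_{predict}$.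
   Context: Ranking score: given a finite predicted set $\mathcal{T}_{predict}$ with scores, sort it in descending order of score (with a fixed tie-breaking, consistent when a triple is added, so that the relative order of the original triples is unchanged) to obtain the list $tri_1,tri_2,\dots$ with positions $i\ge 1$. Define $\mathcal{T}^{WA+}_{predict}=\mathcal{T}_{predict}\cap\mathcal{T}_{test}$, $\mathcal{T}^{WA-}_{predict}=\mathcal{T}_{predict}\cap N_{WA}$, $\mathcal{T}^{WA}_{predict}=\mathcal{T}^{WA+}_{predict}\cup\mathcal{T}^{WA-}_{predict}$. Set $rs_{tri_i}=1/i$ if $tri_i\in\mathcal{T}^{WA+}_{predict}$ and $rs_{tri_i}=-1/i$ if $tri_i\in\mathcal{T}^{WA-}_{predict}$, and $RS_{TSP}=\sum_{tri_i\in\mathcal{T}^{WA}_{predict}} rs_{tri_i}$ (triples in neither set occupy positions but contribute nothing). Under the closed-world assumption (CWA), $N_{CWA}$ is the set of all triples not in $\mathcal{T}_{test}$. Under the relation-similarity partial-open-world assumption (RS-POWA), given a known triple set $\mathcal{T}$ (training triples) and a similarity $sim(r,r')=\max\big(|P_r\cap P_{r'}|/|P_r|,\ |P_r\cap P_{r'}|/|P_{r'}|\big)$, where $P_r$ is the set of entity pairs linked by $r$ in the training and test triples, and threshold $\theta$ (e.g. $0.8$), $N_{RS\text{-}POWA}$ is the set of triples $(h,r,t)\notin\mathcal{T}_{test}$ for which some relation $r'\neq r$ with $(h,r',t)$ a known triple satisfies $sim(r,r')<\theta$. *)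

theory Defs
  imports Complex_Main
begin

type_synonym ('e, 'r) triple = "'e \<times> 'r \<times> 'e"

datatype wa = CWA | RS_POWA

definition N_CWA :: "('e,'r) triple set \<Rightarrow> ('e,'r) triple set" where
  "N_CWA T_test = - T_test"

definition pairs_of :: "('e,'r) triple set \<Rightarrow> ('e,'r) triple set \<Rightarrow> 'r \<Rightarrow> ('e \<times> 'e) set" where
  "pairs_of T_train T_test r = {(h, t). (h, r, t) \<in> T_train \<union> T_test}"

definition rel_sim :: "('e,'r) triple set \<Rightarrow> ('e,'r) triple set \<Rightarrow> 'r \<Rightarrow> 'r \<Rightarrow> real" where
  "rel_sim T_train T_test r r' =
     (let P = pairs_of T_train T_test r; P' = pairs_of T_train T_test r'
      in max (real (card (P \<inter> P')) / real (card P)) (real (card (P \<inter> P')) / real (card P')))"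

text \<open>RS-POWA negatives; the known triples are the training triples.\<close>
definition N_RS_POWA :: "('e,'r) triple set \<Rightarrow> ('e,'r) triple set \<Rightarrow> real \<Rightarrow> ('e,'r) triple set" where
  "N_RS_POWA T_test T_train \<theta> =
     {(h, r, t). (h, r, t) \<notin> T_test \<and>
        (\<exists>r'. r' \<noteq> r \<and> (h, r', t) \<in> T_train \<and> rel_sim T_train T_test r r' < \<theta>)}"

definition N_WA :: "wa \<Rightarrow> ('e,'r) triple set \<Rightarrow> ('e,'r) triple set \<Rightarrow> real \<Rightarrow> ('e,'r) triple set" where
  "N_WA w T_test T_train \<theta> = (case w of CWA \<Rightarrow> N_CWA T_test | RS_POWA \<Rightarrow> N_RS_POWA T_test T_train \<theta>)"

definition ranked_before :: "('a \<Rightarrow> real) \<Rightarrow> 'a rel \<Rightarrow> 'a \<Rightarrow> 'a \<Rightarrow> bool" where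
  "ranked_before score tb y x \<longleftrightarrow> score y > score x \<or> (score y = score x \<and> (y, x) \<in> tb)"

definition rank_pos :: "('a \<Rightarrow> real) \<Rightarrow> 'a rel \<Rightarrow> 'a set \<Rightarrow> 'a \<Rightarrow> nat" where
  "rank_pos score tb S x = card {y \<in> S. ranked_before score tb y x} + 1"

definition RS_TSP :: "('a \<Rightarrow> real) \<Rightarrow> 'a rel \<Rightarrow> 'a set \<Rightarrow> 'a set \<Rightarrow> 'a set \<Rightarrow> real" where
  "RS_TSP score tb Tpos Nneg S =
     (\<Sum>x \<in> S \<inter> Tpos. 1 / real (rank_pos score tb S x))
     + (\<Sum>x \<in> S \<inter> Nneg. - 1 / real (rank_pos score tb S x))"

end

theory Submission
  imports Defs
begin

text \<open>Inserting a triple x at position p gives it the term 1/p, since a positive triple is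
  never a negative. Every triple ranked after x moves down by one position, from some k \<ge> p
  to k + 1, so its term changes by at most 1/k - 1/(k+1). These positions k are distinct, hence
  the total change is bounded by a telescoping sum that stays below 1/p.\<close>

lemma ranked_before_irrefl:
  assumes "strict_linear_order tb"
  shows "\<not> ranked_before score tb x x"
  using assms unfolding ranked_before_def strict_linear_order_on_def irrefl_def by auto

lemma ranked_before_trans:
  assumes "strict_linear_order tb" "ranked_before score tb x y" "ranked_before score tb y z"
  shows "ranked_before score tb x z"
proof -
  have "trans tb" using assms(1) unfolding strict_linear_order_on_def by auto
  then show ?thesis using assms(2,3) unfolding ranked_before_def
    by (auto dest: transD)
qed

lemma ranked_before_total:
  assumes "strict_linear_order tb" "x \<noteq> y"
  shows "ranked_before score tb x y \<or> ranked_before score tb y x"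
  using assms unfolding ranked_before_def strict_linear_order_on_def total_on_def by auto

lemma rank_pos_pos: "rank_pos score tb S x > 0"
  unfolding rank_pos_def by simp

lemma rank_pos_insert_self:
  assumes "strict_linear_order tb"
  shows "rank_pos score tb (insert x S) x = rank_pos score tb S x"
  unfolding rank_pos_def using ranked_before_irrefl[OF assms] by (metis insert_iff mem_Collect_eq)

lemma rank_pos_insert:
  assumes "finite S" "x \<notin> S" "y \<in> S"
  shows "rank_pos score tb (insert x S) y =
           rank_pos score tb S y + (if ranked_before score tb x y then 1 else 0)"
proof -
  have "{z \<in> insert x S. ranked_before score tb z y} =
        (if ranked_before score tb x y then insert x {z \<in> S. ranked_before score tb z y}
         else {z \<in> S. ranked_before score tb z y})" by auto
  then show ?thesis unfolding rank_pos_def using assms by auto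
qed

lemma rank_pos_mono:
  assumes "strict_linear_order tb" "finite S" "ranked_before score tb x y"
  shows "rank_pos score tb S x \<le> rank_pos score tb S y"
proof -
  have "{z \<in> S. ranked_before score tb z x} \<subseteq> {z \<in> S. ranked_before score tb z y}"
    using ranked_before_trans[OF assms(1) _ assms(3)] by auto
  then show ?thesis unfolding rank_pos_def using assms(2) by (simp add: card_mono)
qed

lemma rank_pos_strict_mono:
  assumes "strict_linear_order tb" "finite S" "x \<in> S" "ranked_before score tb x y"
  shows "rank_pos score tb S x < rank_pos score tb S y"
proof -
  have "{z \<in> S. ranked_before score tb z x} \<subset> {z \<in> S. ranked_before score tb z y}"
    using ranked_before_trans[OF assms(1) _ assms(4)] ranked_before_irrefl[OF assms(1)] assms(3,4)
    by auto
  then show ?thesis unfolding rank_pos_def using assms(2) by (simp add: psubset_card_mono)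
qed

lemma inj_on_rank_pos:
  assumes "strict_linear_order tb" "finite S"
  shows "inj_on (rank_pos score tb S) S"
proof (rule inj_onI, rule ccontr)
  fix x y
  assume "x \<in> S" "y \<in> S" "rank_pos score tb S x = rank_pos score tb S y" "x \<noteq> y"
  then show False
    using ranked_before_total[OF assms(1)] rank_pos_strict_mono[OF assms] by (metis less_irrefl)
qed

lemma sum_inverse_gaps_less:
  fixes K :: "nat set"
  assumes "finite K" "K \<subseteq> {p..}" "p > 0"
  shows "(\<Sum>k\<in>K. 1 / real k - 1 / real (Suc k)) < 1 / real p"
proof -
  define m where "m = Suc (Max (insert p K))"
  have "p \<le> Max (insert p K)" "\<forall>k\<in>K. k \<le> Max (insert p K)"
    using assms(1) by simp_all
  then have K_sub: "K \<subseteq> {p..<m}" and "p \<le> m"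
    using assms(2) unfolding m_def by (auto simp: le_imp_less_Suc)
  have telescoping: "(\<Sum>k\<in>{p..<n}. 1 / real k - 1 / real (Suc k)) = 1 / real p - 1 / real n"
    if "p \<le> n" for n
    using that by (induction n rule: dec_induct) simp_all
  have "(\<Sum>k\<in>K. 1 / real k - 1 / real (Suc k))
          \<le> (\<Sum>k\<in>{p..<m}. 1 / real k - 1 / real (Suc k))"
    using assms(3) by (intro sum_mono2[OF _ K_sub]) (auto simp: frac_le)
  also have "\<dots> = 1 / real p - 1 / real m"
    using telescoping[OF \<open>p \<le> m\<close>] .
  also have "\<dots> < 1 / real p"
    using assms(3) \<open>p \<le> m\<close> by simp
  finally show ?thesis .
qed

definition polarity :: "'a set \<Rightarrow> 'a set \<Rightarrow> 'a \<Rightarrow> real" where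
  "polarity Tpos Nneg x = (if x \<in> Tpos then 1 else 0) - (if x \<in> Nneg then 1 else 0)"

lemma abs_polarity_le: "\<bar>polarity Tpos Nneg x\<bar> \<le> 1"
  unfolding polarity_def by auto

lemma RS_TSP_eq_sum_polarity:
  assumes "finite S"
  shows "RS_TSP score tb Tpos Nneg S =
           (\<Sum>x\<in>S. polarity Tpos Nneg x / real (rank_pos score tb S x))"
  using assms unfolding RS_TSP_def polarity_def
  by (auto simp: sum.inter_restrict sum.distrib[symmetric] intro!: sum.cong)

lemma shifted_term_lower_bound:
  assumes "\<bar>c\<bar> \<le> 1" "k > 0"
  shows "c / real (Suc k) \<ge> c / real k - (1 / real k - 1 / real (Suc k))"
proof -
  have gap: "1 / real k - 1 / real (Suc k) \<ge> 0"
    using assms(2) by (simp add: frac_le)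
  have "c / real k - c / real (Suc k) = c * (1 / real k - 1 / real (Suc k))"
    by (simp add: algebra_simps)
  also have "\<dots> \<le> 1 / real k - 1 / real (Suc k)"
    using assms(1) gap by (metis abs_le_D1 mult_left_le_one_le mult_right_mono mult_1)
  finally show ?thesis by simp
qed

lemma sum_rank_gaps_after_less:
  assumes slo: "strict_linear_order tb" and fin: "finite S"
  shows "(\<Sum>y | y \<in> S \<and> ranked_before score tb x y.
            1 / real (rank_pos score tb S y) - 1 / real (Suc (rank_pos score tb S y)))
         < 1 / real (rank_pos score tb S x)"
proof -
  let ?A = "{y \<in> S. ranked_before score tb x y}"
  have "inj_on (rank_pos score tb S) ?A"
    using inj_on_rank_pos[OF slo fin] by (rule inj_on_subset) auto
  then have "(\<Sum>y\<in>?A.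
               1 / real (rank_pos score tb S y) - 1 / real (Suc (rank_pos score tb S y)))
             = (\<Sum>k\<in>rank_pos score tb S ` ?A. 1 / real k - 1 / real (Suc k))"
    by (simp add: sum.reindex)
  also have "\<dots> < 1 / real (rank_pos score tb S x)"
    using rank_pos_mono[OF slo fin] rank_pos_pos fin by (intro sum_inverse_gaps_less) auto
  finally show ?thesis .
qed

lemma RS_TSP_insert_positive:
  assumes slo: "strict_linear_order tb" and fin: "finite S" and "x \<notin> S"
    and "x \<in> Tpos" "x \<notin> Nneg"
  shows "RS_TSP score tb Tpos Nneg S < RS_TSP score tb Tpos Nneg (insert x S)"
proof -
  define q where "q = rank_pos score tb S"
  define q' where "q' = rank_pos score tb (insert x S)"
  define c where "c = polarity Tpos Nneg"
  define loss where
    "loss y = (if ranked_before score tb x y then 1 / real (q y) - 1 / real (Suc (q y)) else 0)"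
    for y
  have shifted: "c y / real (q y) - loss y \<le> c y / real (q' y)" if "y \<in> S" for y
  proof (cases "ranked_before score tb x y")
    case True
    then have "q' y = Suc (q y)"
      using rank_pos_insert[OF fin \<open>x \<notin> S\<close> that] unfolding q_def q'_def by simp
    then show ?thesis
      using True shifted_term_lower_bound[OF abs_polarity_le rank_pos_pos]
      unfolding q_def c_def loss_def by simp
  next
    case False
    then show ?thesis
      using rank_pos_insert[OF fin \<open>x \<notin> S\<close> that]
      unfolding q_def q'_def loss_def by simp
  qed
  have total_loss: "(\<Sum>y\<in>S. loss y) < 1 / real (q x)"
    using sum_rank_gaps_after_less[OF slo fin, where x = x] fin
    unfolding loss_def q_def by (simp add: sum.inter_filter[symmetric])
  have "RS_TSP score tb Tpos Nneg S = (\<Sum>y\<in>S. c y / real (q y))"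
    using RS_TSP_eq_sum_polarity[OF fin] unfolding q_def c_def .
  also have "\<dots> < 1 / real (q x) + (\<Sum>y\<in>S. c y / real (q' y))"
    using sum_mono[of S "\<lambda>y. c y / real (q y) - loss y" "\<lambda>y. c y / real (q' y)"]
      shifted total_loss
    by (simp add: sum_subtractf)
  also have "\<dots> = RS_TSP score tb Tpos Nneg (insert x S)"
    using RS_TSP_eq_sum_polarity[of "insert x S"] rank_pos_insert_self[OF slo]
      fin \<open>x \<notin> S\<close> \<open>x \<in> Tpos\<close> \<open>x \<notin> Nneg\<close>
    unfolding q_def q'_def c_def polarity_def by simp
  finally show ?thesis .
qed

lemma N_WA_disjoint_test: "N_WA w T_test T_train \<theta> \<inter> T_test = {}"
  unfolding N_WA_def N_CWA_def N_RS_POWA_def by (cases w) auto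

theorem theorem1:
  fixes T_test T_train T1 :: "('e, 'r) triple set"
    and \<theta> :: real and w :: wa
    and score :: "('e, 'r) triple \<Rightarrow> real"
    and tb :: "('e, 'r) triple rel"
    and h t :: 'e and r :: 'r
  assumes "strict_linear_order tb"
    and "finite T1"
    and "(h, r, t) \<notin> T1"
    and "(h, r, t) \<in> T_test"
  shows "RS_TSP score tb T_test (N_WA w T_test T_train \<theta>) (insert (h, r, t) T1)
           > RS_TSP score tb T_test (N_WA w T_test T_train \<theta>) T1"
proof (rule RS_TSP_insert_positive[OF assms])
  show "(h, r, t) \<notin> N_WA w T_test T_train \<theta>"
    using N_WA_disjoint_test assms(4) by blast
qed

end
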